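(* For a hat (basic or triangulated) with parameters $\alpha,\beta,\gamma$ (with $\gamma=0$ for basic hats), if $\alpha>2\beta+\gamma$, then at each middle vertex $m$, the sum of the face angles at $m$ of all faces incident to $m$ except one of the (two) spike triangles incident to $m$ is greater than $2\pi$ (i.e., the middle vertices still have negative curvature when one spike triangle is removed). Moreover, for any $\beta,\gamma$ with $30^\circ\le\beta+\gamma/2<45^\circ$ and $0\le\gamma<60^\circ$, there exists $\alpha$ with $30^\circ\le\alpha<90^\circ$ and $\alpha>2\beta+\gamma$.
   Context: Hats are open polyhedra whose boundary is an equilateral triangle; the three boundary vertices are the corners, there is one innermost vertex called the tip, and three middle vertices. The three triangles incident to the tip form the spike: three congruent isosceles triangles with base angles $\alpha$ and unit-length base edges; the middle vertices are the base vertices of the spike. The remaining faces form the brim. Basic hat: parameters $30^\circ\le\alpha,\beta<90^\circ$, $\ell>1$, and $\gamma=0$; the brim consists of three congruent symmetric trapezoids with lower angles $\beta$, top side of length $1$ (a spike base edge) and bottom side of length $\ell$ (a boundary edge). Triangulated hat: parameters with $30^\circ\le\alpha<90^\circ$, $30^\circ\le\beta+\gamma/2<90^\circ$, $\gamma<60^\circ$; the brim consists of three congruent isosceles triangles with bases on the boundary edges, base angles $\beta$ and apex at a middle vertex, and three congruent isosceles triangles with bases the spike base edges and apex angle $\gamma$ at a corner. Curvature of a non-boundary vertex is $2\pi$ minus the sum of face angles at it. *)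

theory Defs
  imports Complex_Main
begin

text \<open>Angles are in radians; deg converts degrees to radians.\<close>
definition deg :: "real \<Rightarrow> real" where "deg x = x * pi / 180"

datatype hat_kind = Basic | Triangulated

definition hat_params :: "hat_kind \<Rightarrow> real \<Rightarrow> real \<Rightarrow> real \<Rightarrow> bool" where
  "hat_params k \<alpha> \<beta> \<gamma> = (case k of
     Basic \<Rightarrow> deg 30 \<le> \<alpha> \<and> \<alpha> < deg 90 \<and> deg 30 \<le> \<beta> \<and> \<beta> < deg 90 \<and> \<gamma> = 0
   | Triangulated \<Rightarrow> deg 30 \<le> \<alpha> \<and> \<alpha> < deg 90 \<and> deg 30 \<le> \<beta> + \<gamma>/2 \<and>
        \<beta> + \<gamma>/2 < deg 90 \<and> \<gamma> < deg 60)"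

definition iso_apex_angle :: "real \<Rightarrow> real" where
  "iso_apex_angle b = pi - 2 * b"   \<comment> \<open>isosceles triangle with base angles b\<close>
definition iso_base_angle :: "real \<Rightarrow> real" where
  "iso_base_angle g = (pi - g) / 2" \<comment> \<open>isosceles triangle with apex angle g\<close>
definition trap_upper_angle :: "real \<Rightarrow> real" where
  "trap_upper_angle b = pi - b"     \<comment> \<open>symmetric trapezoid with lower angles b\<close>

text \<open>Face angles at a middle vertex m. The spike triangles incident to m
  (two of them, each with base angle alpha at m):\<close>
definition middle_spike_angles :: "real \<Rightarrow> real list" where
  "middle_spike_angles \<alpha> = [\<alpha>, \<alpha>]"

text \<open>Brim faces incident to m: basic hat -- the two trapezoids whose top sides
  are the two spike base edges at m (upper angle at m); triangulated hat -- the
  boundary triangle with apex m, and the two corner triangles whose bases are the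
  spike base edges at m (base angle at m).\<close>
definition middle_brim_angles :: "hat_kind \<Rightarrow> real \<Rightarrow> real \<Rightarrow> real list" where
  "middle_brim_angles k \<beta> \<gamma> = (case k of
     Basic \<Rightarrow> [trap_upper_angle \<beta>, trap_upper_angle \<beta>]
   | Triangulated \<Rightarrow> [iso_apex_angle \<beta>, iso_base_angle \<gamma>, iso_base_angle \<gamma>])"

end

theory Submission
  imports Defs
begin

text \<open>The brim faces contribute 2\<pi> - (2\<beta> + \<gamma>) to the angle sum at a middle vertex, and each
  remaining spike triangle contributes \<alpha>; so the sum exceeds 2\<pi> exactly when \<alpha> > 2\<beta> + \<gamma>.
  For the second part, the midpoint of 2\<beta> + \<gamma> and 90 degrees is an admissible \<alpha>.\<close>

lemma sum_list_middle_spike_angles_minus_nth: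
  assumes "i < length (middle_spike_angles \<alpha>)"
  shows "sum_list (middle_spike_angles \<alpha>) - middle_spike_angles \<alpha> ! i = \<alpha>"
  using assms by (auto simp: middle_spike_angles_def less_Suc_eq)

lemma sum_list_middle_brim_angles:
  assumes "hat_params k \<alpha> \<beta> \<gamma>"
  shows "sum_list (middle_brim_angles k \<beta> \<gamma>) = 2 * pi - (2 * \<beta> + \<gamma>)"
  using assms
  by (cases k) (auto simp: hat_params_def middle_brim_angles_def trap_upper_angle_def
      iso_apex_angle_def iso_base_angle_def)

lemma exists_angle_between:
  fixes x :: real
  assumes "deg 60 \<le> x" and "x < deg 90"
  shows "\<exists>\<alpha>. deg 30 \<le> \<alpha> \<and> \<alpha> < deg 90 \<and> \<alpha> > x"
proof (intro exI conjI)
  show "deg 30 \<le> (x + deg 90) / 2" and "(x + deg 90) / 2 < deg 90" and "(x + deg 90) / 2 > x"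
    using assms pi_gt_zero by (auto simp: deg_def)
qed

theorem lemma7:
  shows "(\<forall>k \<alpha> \<beta> \<gamma>. hat_params k \<alpha> \<beta> \<gamma> \<and> \<alpha> > 2 * \<beta> + \<gamma> \<longrightarrow>
            (\<forall>i < length (middle_spike_angles \<alpha>).
               sum_list (middle_spike_angles \<alpha>) - middle_spike_angles \<alpha> ! i
               + sum_list (middle_brim_angles k \<beta> \<gamma>) > 2 * pi))
       \<and> (\<forall>\<beta> \<gamma>. deg 30 \<le> \<beta> + \<gamma>/2 \<and> \<beta> + \<gamma>/2 < deg 45 \<and> 0 \<le> \<gamma> \<and> \<gamma> < deg 60 \<longrightarrow>
            (\<exists>\<alpha>. deg 30 \<le> \<alpha> \<and> \<alpha> < deg 90 \<and> \<alpha> > 2 * \<beta> + \<gamma>))"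
proof (intro conjI allI impI)
  fix k \<alpha> \<beta> \<gamma> i
  assume "hat_params k \<alpha> \<beta> \<gamma> \<and> \<alpha> > 2 * \<beta> + \<gamma>"
    and "i < length (middle_spike_angles \<alpha>)"
  then show "sum_list (middle_spike_angles \<alpha>) - middle_spike_angles \<alpha> ! i
               + sum_list (middle_brim_angles k \<beta> \<gamma>) > 2 * pi"
    by (auto simp: sum_list_middle_spike_angles_minus_nth sum_list_middle_brim_angles)
next
  fix \<beta> \<gamma> :: real
  assume "deg 30 \<le> \<beta> + \<gamma>/2 \<and> \<beta> + \<gamma>/2 < deg 45 \<and> 0 \<le> \<gamma> \<and> \<gamma> < deg 60"
  then have "deg 60 \<le> 2 * \<beta> + \<gamma>" and "2 * \<beta> + \<gamma> < deg 90"
    by (auto simp: deg_def)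
  then show "\<exists>\<alpha>. deg 30 \<le> \<alpha> \<and> \<alpha> < deg 90 \<and> \<alpha> > 2 * \<beta> + \<gamma>"
    by (rule exists_angle_between)
qed

end
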